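(* Let $d_0<d_1<d_2<\cdots$ be the increasing enumeration of $\mathcal{D}=\{m\ge1:\ c_m=0\}$ (so $d_0=3$), and for $n\ge0$ let $z_n=\left(\frac{d_{4n}+1}{4}-n\right)\bmod 2\in\{0,1\}$ (here $\frac{d_{4n}+1}{4}$ is an integer). Then $z_n=1$ if and only if $n$ can be written as $n=\sum_{i=0}^{s}2^{n_i-1}(2^{n_i}-1)$ for some (possibly empty, giving $n=0$) strictly increasing sequence of integers $1<n_0<n_1<\cdots<n_s$.
   Context: For $n\in\mathbb{N}$ let $s_2(n)$ be the sum of the binary digits of $n$ and $t_n=s_2(n)\bmod 2$ (the Prouhet–Thue–Morse sequence). Let $F(X)=\sum_{n\ge1}t_nX^n\in\mathbb{F}_2[[X]]$ and let $G(X)=\sum_{n\ge1}c_nX^n\in\mathbb{F}_2[[X]]$ be its compositional inverse, i.e. $F(G(X))=G(F(X))=X$. The $c_n$ are identified with integers in $\{0,1\}$. *)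

theory Defs
  imports "HOL-Computational_Algebra.Formal_Power_Series" "HOL-Library.Z2" "HOL-Library.Infinite_Set"
begin

fun s2 :: "nat \<Rightarrow> nat" where
  "s2 n = (if n = 0 then 0 else n mod 2 + s2 (n div 2))"

definition ptm :: "nat \<Rightarrow> nat" where
  "ptm n = s2 n mod 2"

definition tmF :: "bit fps" where
  "tmF = Abs_fps (\<lambda>n. if n \<ge> 1 then of_nat (ptm n) else 0)"

definition tmG :: "bit fps" where
  "tmG = fps_inv tmF"

definition cc :: "nat \<Rightarrow> nat" where
  "cc n = (if fps_nth tmG n = 0 then 0 else 1)"

definition DD :: "nat set" where
  "DD = {m. m \<ge> 1 \<and> cc m = 0}"

definition dd :: "nat \<Rightarrow> nat" where
  "dd k = Infinite_Set.enumerate DD k"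

definition zz :: "nat \<Rightarrow> int" where
  "zz n = ((int (dd (4*n)) + 1) div 4 - int n) mod 2"

end

theory Submission
  imports Defs
begin

text \<open>
  Because \<open>t\<^sub>2\<^sub>n = t\<^sub>n\<close> and \<open>t\<^sub>2\<^sub>n\<^sub>+\<^sub>1 = 1 + t\<^sub>n\<close>, over \<open>\<bbbF>\<^sub>2\<close> the series
  \<open>F + (1 + X) F\<^sup>2\<close> has all odd coefficients equal to 1, i.e. \<open>(1 + X\<^sup>2)(F + (1 + X) F\<^sup>2) = X\<close>.
  Substituting \<open>X := G\<close> gives an algebraic equation for \<open>G\<close>, which for \<open>W = X (1 + G)\<close>
  becomes \<open>W = W\<^sup>4 + X + X W\<close>. As \<open>W\<^sup>4 = W(X\<^sup>4)\<close> in characteristic 2, this is the recursion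
  \<open>w\<^sub>n = [4 | n] w\<^sub>n\<^sub>/\<^sub>4 + [n = 1] + w\<^sub>n\<^sub>-\<^sub>1\<close>, solved by \<open>w\<^sub>n = [j marked]\<close> for \<open>n \<ge> 4\<close>,
  \<open>j = n div 4\<close>, where \<open>j > 0\<close> is marked if \<open>j\<close> or \<open>j - 2\<close> lies in \<open>8M\<close>, and \<open>M\<close> is the
  Moser--de Bruijn sequence of sums of distinct powers of 4.

  Hence \<open>\<D>\<close> is a union of blocks \<open>{4k+3, \<dots>, 4k+6}\<close>, one for each \<open>k\<close> with \<open>k+1\<close>
  unmarked, so \<open>d\<^sub>4\<^sub>n = 4e\<^sub>n + 3\<close> for the \<open>n\<close>-th such \<open>k = e\<^sub>n\<close>, and
  \<open>(d\<^sub>4\<^sub>n + 1)/4 - n\<close> is one more than the number of marked integers in \<open>[1, e\<^sub>n]\<close>. Between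
  consecutive points \<open>8M(t) < 8M(t+1)\<close> exactly \<open>8M(t) + 2\<close> and \<open>8M(t+1)\<close> are marked, so this
  count is even iff \<open>e\<^sub>n \<in> 8M\<close>, and \<open>e\<^sub>n = 8M(t)\<close> iff \<open>n = 8M(t) - 2t\<close>. Finally, if
  \<open>t = \<Sum>\<^sub>j\<^sub>\<in>\<^sub>T 2\<^sup>j\<close> then \<open>8M(t) - 2t = \<Sum>\<^sub>j\<^sub>\<in>\<^sub>T 2\<^sup>j\<^sup>+\<^sup>1(2\<^sup>j\<^sup>+\<^sup>2 - 1)\<close>, the asserted sum over \<open>S = T + 2\<close>.
\<close>

section \<open>Power series over a ring of characteristic two\<close>

lemma fps_square_nth_char2:
  fixes f :: "'a::comm_ring_1 fps"
  assumes two: "(2::'a) = 0"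
  shows "fps_nth (f^2) n = (if even n then (fps_nth f (n div 2))^2 else 0)"
proof (induction n arbitrary: f rule: less_induct)
  case (less n)
  define g where "g = fps_shift 1 f"
  have f_eq: "f = fps_const (fps_nth f 0) + fps_X * g"
    by (rule fps_ext) (simp add: g_def fps_X_mult_nth)
  have "f^2 = fps_const ((fps_nth f 0)^2) + fps_X^2 * g^2
      + 2 * fps_const (fps_nth f 0) * fps_X * g"
    by (subst f_eq) (simp add: power2_eq_square algebra_simps flip: fps_const_mult)
  moreover have "(2::'a fps) = 0"
    by (simp add: fps_numeral_fps_const two)
  ultimately have sq: "f^2 = fps_const ((fps_nth f 0)^2) + fps_X^2 * g^2"
    by simp
  show ?case
  proof (cases "n < 2")
    case True
    then show ?thesis by (auto simp: sq less_2_cases_iff fps_X_power_mult_nth)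
  next
    case False
    then have "fps_nth (f^2) n = fps_nth (g^2) (n - 2)" by (simp add: sq fps_X_power_mult_nth)
    also have "\<dots> = (if even n then (fps_nth f (n div 2))^2 else 0)"
    proof -
      have "even (n - 2) = even n" "Suc ((n - 2) div 2) = n div 2"
        using False by presburger+
      then show ?thesis using False less[of "n - 2" g] by (simp add: g_def)
    qed
    finally show ?thesis .
  qed
qed

lemma fps_power4_nth_char2:
  fixes f :: "'a::comm_ring_1 fps"
  assumes "(2::'a) = 0"
  shows "fps_nth (f^4) n = (if 4 dvd n then (fps_nth f (n div 4))^4 else 0)"
proof -
  have "fps_nth (f^4) n = fps_nth ((f^2)^2) n"
    by (simp flip: power_mult)
  also have "\<dots> = (if even n then (if even (n div 2) then (fps_nth f (n div 2 div 2))^2 else 0)^2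
      else 0)"
    by (simp only: fps_square_nth_char2[OF assms])
  also have "\<dots> = (if 4 dvd n then (fps_nth f (n div 4))^4 else 0)"
    by (auto simp: div_mult2_eq[symmetric] simp flip: power_mult elim!: evenE)
  finally show ?thesis .
qed

lemma char2_quartic_of_relation:
  fixes G X :: "'a::comm_ring_1"
  assumes "(2::'a) = 0" and "(1 + G^2) * (X + (1 + G) * X^2) = G"
  shows "(X * (1 + G))^4 + X * (1 + G) + X + X * (X * (1 + G)) = 0"
proof -
  have "(X * (1 + G))^4 + X * (1 + G) + X + X * (X * (1 + G))
      = (1 + X * (1 + G)) * X * ((1 + G^2) * (X + (1 + G) * X^2) - G)
        + 2 * (X + X*G + X^2*G - X^3 - X^3*G - X^3*G^2 - X^3*G^3 + X^4*G + 2*X^4*G^2 + X^4*G^3)"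
    by (simp add: algebra_simps power2_eq_square power3_eq_cube power4_eq_xxxx mult_2)
  then show ?thesis
    using assms by simp
qed

lemma of_nat_bit: "(of_nat k :: bit) = of_bool (odd k)"
  by (induction k) auto

lemma uminus_bit_fps: "- (f :: bit fps) = f"
  by (rule fps_ext) simp

section \<open>Enumerating infinite sets of naturals\<close>

lemma enumerate_less_eq_image:
  fixes S :: "nat set"
  assumes "infinite S"
  shows "{s \<in> S. s < enumerate S n} = enumerate S ` {..<n}"
proof
  show "enumerate S ` {..<n} \<subseteq> {s \<in> S. s < enumerate S n}"
    using assms by (auto intro: enumerate_in_set)
  show "{s \<in> S. s < enumerate S n} \<subseteq> enumerate S ` {..<n}"
  proof
    fix s assume s: "s \<in> {s \<in> S. s < enumerate S n}"
    then obtain i where "enumerate S i = s"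
      using enumerate_Ex[OF assms] by blast
    with s assms show "s \<in> enumerate S ` {..<n}" by auto
  qed
qed

lemma card_less_enumerate:
  fixes S :: "nat set"
  assumes "infinite S"
  shows "card {s \<in> S. s < enumerate S n} = n"
  using inj_enumerate[OF assms]
  by (simp add: enumerate_less_eq_image[OF assms] card_image inj_on_subset)

lemma enumerate_eq_iff_card:
  fixes S :: "nat set"
  assumes "infinite S" "s \<in> S"
  shows "enumerate S n = s \<longleftrightarrow> card {x \<in> S. x < s} = n"
proof
  show "enumerate S n = s \<Longrightarrow> card {x \<in> S. x < s} = n"
    using card_less_enumerate[OF assms(1)] by blast
  assume "card {x \<in> S. x < s} = n"
  moreover obtain i where "enumerate S i = s"
    using enumerate_Ex[OF assms] by blast
  ultimately show "enumerate S n = s"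
    using card_less_enumerate[OF assms(1), of i] by simp
qed

lemma blocks_below_eq_image:
  fixes S :: "nat set"
  assumes "0 < b"
  shows "{m \<in> {m. c \<le> m \<and> (m - c) div b \<in> S}. m < b * e + c}
    = (\<lambda>(k, r). b * k + c + r) ` ({k \<in> S. k < e} \<times> {..<b})"
proof (intro equalityI subsetI)
  fix m assume "m \<in> {m \<in> {m. c \<le> m \<and> (m - c) div b \<in> S}. m < b * e + c}"
  then have "m = b * ((m - c) div b) + c + (m - c) mod b" "(m - c) div b \<in> S" "m - c < e * b"
    by (auto simp: mult.commute)
  then have "m = b * ((m - c) div b) + c + (m - c) mod b" "(m - c) div b \<in> S" "(m - c) div b < e"
    by (auto intro: less_mult_imp_div_less)
  then show "m \<in> (\<lambda>(k, r). b * k + c + r) ` ({k \<in> S. k < e} \<times> {..<b})"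
    using assms by (intro image_eqI[of m _ "((m - c) div b, (m - c) mod b)"]) auto
next
  fix m assume "m \<in> (\<lambda>(k, r). b * k + c + r) ` ({k \<in> S. k < e} \<times> {..<b})"
  then obtain k r where m: "m = b * k + c + r" "k \<in> S" "k < e" "r < b"
    by auto
  have "b * k + r < b * Suc k"
    using m(4) by simp
  also have "\<dots> \<le> b * e"
    using m(3) by (intro mult_le_mono2) simp
  finally show "m \<in> {m \<in> {m. c \<le> m \<and> (m - c) div b \<in> S}. m < b * e + c}"
    using m by simp
qed

lemma enumerate_blocks:
  fixes S :: "nat set"
  assumes S: "infinite S" and b: "0 < b"
  shows "enumerate {m. c \<le> m \<and> (m - c) div b \<in> S} (b * n) = b * enumerate S n + c"
proof -
  define T where "T = {m. c \<le> m \<and> (m - c) div b \<in> S}"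
  define e where "e = enumerate S n"
  have "inj_on (\<lambda>(k, r). b * k + c + r) ({k \<in> S. k < e} \<times> {..<b})"
    by (rule inj_on_inverseI[of _ "\<lambda>m. ((m - c) div b, (m - c) mod b)"]) auto
  then have "card {m \<in> T. m < b * e + c} = b * n"
    unfolding T_def blocks_below_eq_image[OF b]
    by (simp add: card_image card_cartesian_product card_less_enumerate[OF S] e_def)
  moreover have "b * e + c \<in> T"
    using enumerate_in_set[OF S] b by (simp add: T_def e_def)
  moreover have "infinite T"
  proof
    assume "finite T"
    moreover have "(\<lambda>k. b * k + c) ` S \<subseteq> T"
      using b by (auto simp: T_def)
    ultimately have "finite ((\<lambda>k. b * k + c) ` S)"
      by (rule finite_subset[rotated])
    then show False
      using S b by (auto dest!: finite_imageD simp: inj_on_def)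
  qed
  ultimately show ?thesis
    unfolding T_def[symmetric] e_def[symmetric] by (simp add: enumerate_eq_iff_card)
qed

section \<open>Binary digits and the Moser--de Bruijn sequence\<close>

lemma sum_power_split:
  fixes x :: "'a::comm_semiring_1"
  assumes "finite T"
  shows "(\<Sum>j\<in>T. x^j) = of_bool (0 \<in> T) + x * (\<Sum>j\<in>{j. Suc j \<in> T}. x^j)"
proof -
  have T: "T = (T \<inter> {0}) \<union> Suc ` {j. Suc j \<in> T}"
    by (auto simp: image_iff) (metis not0_implies_Suc)
  have "finite {j. Suc j \<in> T}"
    using finite_vimageI[OF assms inj_Suc] by (simp add: vimage_def)
  then have "(\<Sum>j\<in>T. x^j) = (\<Sum>j\<in>T \<inter> {0}. x^j) + (\<Sum>j\<in>Suc ` {j. Suc j \<in> T}. x^j)"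
    using assms by (subst T) (rule sum.union_disjoint, auto)
  also have "\<dots> = of_bool (0 \<in> T) + x * (\<Sum>j\<in>{j. Suc j \<in> T}. x^j)"
    by (simp add: sum.reindex sum_distrib_left Int_insert_right)
  finally show ?thesis .
qed

lemma ex_binary_digits: "\<exists>T. finite T \<and> (t::nat) = (\<Sum>j\<in>T. 2^j)"
proof (induction t rule: less_induct)
  case (less t)
  show ?case
  proof (cases "t = 0")
    case False
    then obtain T' where T': "finite T'" "t div 2 = (\<Sum>j\<in>T'. 2^j)"
      using less[of "t div 2"] by auto
    define T where "T = (if odd t then {0} else {}) \<union> Suc ` T'"
    have "finite T" "{j. Suc j \<in> T} = T'" "0 \<in> T \<longleftrightarrow> odd t"
      using T'(1) by (auto simp: T_def)
    then have "(\<Sum>j\<in>T. 2^j) = of_bool (odd t) + 2 * (t div 2)"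
      using sum_power_split[of T "2::nat"] T'(2) by simp
    also have "\<dots> = t"
      by (cases "even t") simp_all
    finally show ?thesis
      using \<open>finite T\<close> by metis
  qed (intro exI[of _ "{}"], simp)
qed

fun moser_de_bruijn :: "nat \<Rightarrow> nat" where
  "moser_de_bruijn t = (if t = 0 then 0 else 4 * moser_de_bruijn (t div 2) + t mod 2)"

lemma moser_de_bruijn_rec: "moser_de_bruijn t = 4 * moser_de_bruijn (t div 2) + t mod 2"
  by (cases "t = 0") simp_all

declare moser_de_bruijn.simps [simp del]

lemma moser_de_bruijn_0 [simp]: "moser_de_bruijn 0 = 0"
  by (simp add: moser_de_bruijn.simps)

lemma moser_de_bruijn_double [simp]: "moser_de_bruijn (2 * t) = 4 * moser_de_bruijn t"
  and moser_de_bruijn_Suc_double [simp]: "moser_de_bruijn (Suc (2 * t)) = Suc (4 * moser_de_bruijn t)"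
  using moser_de_bruijn_rec[of "2 * t"] moser_de_bruijn_rec[of "Suc (2 * t)"] by simp_all

lemma moser_de_bruijn_less_Suc: "moser_de_bruijn t < moser_de_bruijn (Suc t)"
proof (induction t rule: less_induct)
  case (less t)
  show ?case
  proof (cases "even t")
    case True
    then show ?thesis by (auto elim!: evenE)
  next
    case False
    then obtain s where t: "t = Suc (2 * s)"
      by (metis oddE Suc_eq_plus1)
    then show ?thesis
      using less[of s] moser_de_bruijn_double[of "Suc s"] by simp
  qed
qed

lemma strict_mono_moser_de_bruijn: "strict_mono moser_de_bruijn"
  by (simp add: strict_mono_Suc_iff moser_de_bruijn_less_Suc)

lemma moser_de_bruijn_sum_pow2:
  "finite T \<Longrightarrow> moser_de_bruijn (\<Sum>j\<in>T. 2^j) = (\<Sum>j\<in>T. 4^j)"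
proof (induction "\<Sum>j\<in>T. 2^j :: nat" arbitrary: T rule: less_induct)
  case less
  define T' where "T' = {j. Suc j \<in> T}"
  have split2: "(\<Sum>j\<in>T. 2^j) = of_bool (0 \<in> T) + 2 * (\<Sum>j\<in>T'. 2^j :: nat)"
    and split4: "(\<Sum>j\<in>T. 4^j) = of_bool (0 \<in> T) + 4 * (\<Sum>j\<in>T'. 4^j :: nat)"
    unfolding T'_def using sum_power_split[OF less.prems] by blast+
  have "finite T'"
    using finite_vimageI[OF less.prems inj_Suc] by (simp add: T'_def vimage_def)
  show ?case
  proof (cases "T = {}")
    case False
    then have "0 < (\<Sum>j\<in>T. 2^j :: nat)"
      using less.prems by (intro sum_pos) auto
    then have "(\<Sum>j\<in>T'. 2^j) < (\<Sum>j\<in>T. 2^j :: nat)"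
      using split2 by linarith
    then have "moser_de_bruijn (\<Sum>j\<in>T'. 2^j) = (\<Sum>j\<in>T'. 4^j)"
      using less.hyps \<open>finite T'\<close> by blast
    then show ?thesis
      unfolding split2 split4 by (cases "0 \<in> T") simp_all
  qed simp
qed

lemma sum_shift2_pow2:
  fixes T :: "nat set"
  shows "(\<Sum>i\<in>(+) 2 ` T. 2^(i-1) * (2^i - 1)) + 2 * (\<Sum>j\<in>T. 2^j)
    = 8 * (\<Sum>j\<in>T. 4^j :: nat)"
proof -
  have summand: "2^(2+j-1) * (2^(2+j) - 1) + 2 * 2^j = 8 * (4::nat)^j" for j :: nat
  proof -
    define a :: nat where "a = 2^j"
    have "(4::nat)^j = a * a" "(2::nat)^(2+j-1) = 2 * a" "(2::nat)^(2+j) = 4 * a" "1 \<le> a"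
      by (simp_all add: a_def flip: power_mult_distrib)
    then show ?thesis
      by (simp add: a_def[symmetric] diff_mult_distrib2)
  qed
  have "(\<Sum>i\<in>(+) 2 ` T. 2^(i-1) * (2^i - 1))
      = (\<Sum>j\<in>T. 2^(2+j-1) * (2^(2+j) - 1) :: nat)"
    by (subst sum.reindex) auto
  then show ?thesis
    by (simp only: sum_distrib_left summand flip: sum.distrib)
qed

lemma ex_sum_iff_moser_de_bruijn:
  "(\<exists>S. finite S \<and> (\<forall>i\<in>S. 1 < i) \<and> n = (\<Sum>i\<in>S. 2^(i-1) * (2^i - 1)))
    \<longleftrightarrow> (\<exists>t. n + 2 * t = 8 * moser_de_bruijn t)"
proof
  assume "\<exists>S. finite S \<and> (\<forall>i\<in>S. 1 < i) \<and> n = (\<Sum>i\<in>S. 2^(i-1) * (2^i - 1))"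
  then obtain S where S: "finite S" "\<forall>i\<in>S. 1 < i" "n = (\<Sum>i\<in>S. 2^(i-1) * (2^i - 1))"
    by blast
  define T where "T = (\<lambda>i. i - 2) ` S"
  have "finite T"
    using S(1) by (simp add: T_def)
  have "(\<lambda>i. 2 + (i - 2)) ` S = (\<lambda>i. i) ` S"
    by (rule image_cong) (use S(2) in auto)
  then have "S = (+) 2 ` T"
    by (simp add: T_def image_image)
  then have "n + 2 * (\<Sum>j\<in>T. 2^j) = 8 * moser_de_bruijn (\<Sum>j\<in>T. 2^j)"
    using S(3) sum_shift2_pow2[of T] \<open>finite T\<close> by (simp add: moser_de_bruijn_sum_pow2)
  then show "\<exists>t. n + 2 * t = 8 * moser_de_bruijn t" ..
next
  assume "\<exists>t. n + 2 * t = 8 * moser_de_bruijn t"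
  then obtain t T where "n + 2 * t = 8 * moser_de_bruijn t" "finite T" "t = (\<Sum>j\<in>T. 2^j)"
    using ex_binary_digits by blast
  then have "n = (\<Sum>i\<in>(+) 2 ` T. 2^(i-1) * (2^i - 1))"
    using sum_shift2_pow2[of T] by (simp add: moser_de_bruijn_sum_pow2)
  with \<open>finite T\<close> show "\<exists>S. finite S \<and> (\<forall>i\<in>S. 1 < i) \<and> n = (\<Sum>i\<in>S. 2^(i-1) * (2^i - 1))"
    by (intro exI[of _ "(+) 2 ` T"]) auto
qed

section \<open>Marked integers\<close>

definition moser8 :: "nat set" where
  "moser8 = range (\<lambda>t. 8 * moser_de_bruijn t)"

lemma in_moser8_iff: "m \<in> moser8 \<longleftrightarrow> (\<exists>t. m = 8 * moser_de_bruijn t)"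
  by (auto simp: moser8_def)

lemma zero_in_moser8: "0 \<in> moser8"
  unfolding in_moser8_iff by (rule exI[of _ 0]) simp

lemma moser8_mod8: "m \<in> moser8 \<Longrightarrow> m mod 8 = 0"
  unfolding in_moser8_iff by auto

lemma moser8_gap:
  assumes "x \<in> moser8" "y \<in> moser8" "x < y"
  shows "x + 8 \<le> y"
proof -
  have "x mod 8 = 0" "y mod 8 = 0"
    using assms(1,2) by (simp_all add: moser8_mod8)
  with assms(3) show ?thesis by presburger
qed

lemma moser8_not_between:
  assumes "8 * moser_de_bruijn t < m" "m < 8 * moser_de_bruijn (Suc t)"
  shows "m \<notin> moser8"
proof
  assume "m \<in> moser8"
  then obtain v where "m = 8 * moser_de_bruijn v"
    unfolding in_moser8_iff by blast
  with assms have "t < v" "v < Suc t"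
    using strict_mono_moser_de_bruijn by (simp_all add: strict_mono_less)
  then show False by simp
qed

lemma times4_in_moser8_iff: "4 * q \<in> moser8 \<longleftrightarrow> q \<in> moser8 \<or> (2 \<le> q \<and> q - 2 \<in> moser8)"
proof
  assume "4 * q \<in> moser8"
  then obtain t where "4 * q = 8 * moser_de_bruijn t"
    unfolding in_moser8_iff by blast
  then have q: "q = 8 * moser_de_bruijn (t div 2) + 2 * (t mod 2)"
    by (simp add: moser_de_bruijn_rec[of t])
  show "q \<in> moser8 \<or> (2 \<le> q \<and> q - 2 \<in> moser8)"
  proof (cases "even t")
    case True
    then have "q = 8 * moser_de_bruijn (t div 2)"
      using q by simp
    then show ?thesis
      unfolding in_moser8_iff by blast
  next
    case False
    then have "q = 8 * moser_de_bruijn (t div 2) + 2"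
      using q by (simp add: odd_iff_mod_2_eq_one)
    then show ?thesis
      unfolding in_moser8_iff by auto
  qed
next
  assume "q \<in> moser8 \<or> (2 \<le> q \<and> q - 2 \<in> moser8)"
  then obtain t where "q = 8 * moser_de_bruijn t \<or> q = 8 * moser_de_bruijn t + 2"
    unfolding in_moser8_iff by (metis le_add_diff_inverse2)
  then have "4 * q = 8 * moser_de_bruijn (2 * t) \<or> 4 * q = 8 * moser_de_bruijn (2 * t + 1)"
    by auto
  then show "4 * q \<in> moser8"
    unfolding in_moser8_iff by blast
qed

definition marked :: "nat \<Rightarrow> bool" where
  "marked j \<longleftrightarrow> 0 < j \<and> (j \<in> moser8 \<or> (2 \<le> j \<and> j - 2 \<in> moser8))"

lemma marked_odd:
  assumes "odd j"
  shows "\<not> marked j"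
proof
  assume "marked j"
  then have "j mod 8 = 0 \<or> (2 \<le> j \<and> (j - 2) mod 8 = 0)"
    unfolding marked_def using moser8_mod8 by blast
  with assms show False by presburger
qed

lemma marked_2: "marked 2"
  by (simp add: marked_def zero_in_moser8)

lemma marked_times4: "0 < q \<Longrightarrow> marked (4 * q) \<longleftrightarrow> marked q"
  and marked_times4_plus2: "0 < q \<Longrightarrow> marked (4 * q + 2) \<longleftrightarrow> marked q"
proof -
  assume q: "0 < q"
  have "(4 * q - 2) mod 8 \<noteq> 0" "(4 * q + 2) mod 8 \<noteq> 0"
    using q by presburger+
  then have "4 * q - 2 \<notin> moser8" "4 * q + 2 \<notin> moser8"
    by (metis moser8_mod8)+
  then show "marked (4 * q) \<longleftrightarrow> marked q" "marked (4 * q + 2) \<longleftrightarrow> marked q"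
    using q by (simp_all add: marked_def times4_in_moser8_iff)
qed

lemma marked_rec:
  assumes "4 \<le> j"
  shows "marked j \<longleftrightarrow> marked (j - 1) \<noteq> marked (j div 4)"
proof -
  define q where "q = j div 4"
  have q: "0 < q" using assms by (simp add: q_def)
  consider "j = 4 * q" | "j - 1 = 4 * q" | "j = 4 * q + 2" | "j - 1 = 4 * q + 2"
    unfolding q_def by linarith
  then have "marked j \<longleftrightarrow> marked (j - 1) \<noteq> marked q"
  proof cases
    case 1
    moreover have "\<not> marked (j - 1)"
      by (rule marked_odd) (use 1 q in presburger)
    ultimately show ?thesis using marked_times4[OF q] by simp
  next
    case 2
    moreover have "\<not> marked j"
      by (rule marked_odd) (use 2 q in presburger)
    ultimately show ?thesis using marked_times4[OF q] by simp
  next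
    case 3
    moreover have "\<not> marked (j - 1)"
      by (rule marked_odd) (use 3 in presburger)
    ultimately show ?thesis using marked_times4_plus2[OF q] by simp
  next
    case 4
    moreover have "\<not> marked j"
      by (rule marked_odd) (use 4 q in presburger)
    ultimately show ?thesis using marked_times4_plus2[OF q] by simp
  qed
  then show ?thesis by (simp add: q_def)
qed

lemma marked_between:
  assumes "8 * moser_de_bruijn t < j" "j \<le> 8 * moser_de_bruijn (Suc t)"
  shows "marked j \<longleftrightarrow> j = 8 * moser_de_bruijn t + 2 \<or> j = 8 * moser_de_bruijn (Suc t)"
proof -
  let ?a = "8 * moser_de_bruijn t" and ?b = "8 * moser_de_bruijn (Suc t)"
  have ab: "?a + 8 \<le> ?b"
    using moser_de_bruijn_less_Suc[of t] by simp
  have a: "?a \<in> moser8" and b: "?b \<in> moser8"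
    by (auto simp: in_moser8_iff)
  have "j \<in> moser8 \<longleftrightarrow> j = ?b"
    using assms moser8_not_between[of t j] b by (cases "j < ?b") auto
  moreover have "2 \<le> j \<and> j - 2 \<in> moser8 \<longleftrightarrow> j = ?a + 2"
  proof
    assume j: "2 \<le> j \<and> j - 2 \<in> moser8"
    have "j - 2 < ?b"
      using assms(2) j by linarith
    then have "\<not> ?a < j - 2"
      using moser8_not_between[of t "j - 2"] j by blast
    moreover have "\<not> j - 2 < ?a"
      using moser8_gap[of "j - 2" ?a] a j assms(1) by linarith
    ultimately show "j = ?a + 2" using j by linarith
  qed (use a in simp)
  ultimately show ?thesis
    using assms ab by (auto simp: marked_def)
qed

definition marked_count :: "nat \<Rightarrow> nat" where
  "marked_count K = card {k. k < K \<and> marked (Suc k)}"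

lemma marked_count_0 [simp]: "marked_count 0 = 0"
  by (simp add: marked_count_def)

lemma marked_count_Suc: "marked_count (Suc K) = marked_count K + of_bool (marked (Suc K))"
proof -
  have "{k. k < Suc K \<and> marked (Suc k)}
      = {k. k < K \<and> marked (Suc k)} \<union> (if marked (Suc K) then {K} else {})"
    by (auto simp: less_Suc_eq)
  then show ?thesis
    by (simp add: marked_count_def)
qed

lemma odd_marked_count_iff:
  "odd (marked_count K) \<longleftrightarrow> K \<notin> moser8 \<and> (K = 0 \<or> K - 1 \<notin> moser8)"
proof (induction K)
  case 0
  then show ?case by (simp add: zero_in_moser8)
next
  case (Suc K)
  have "\<not> (x \<in> moser8 \<and> y \<in> moser8)" if "x < y" "y \<le> x + 2" for x y
    using that moser8_gap[of x y] by auto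
  from this[of K "Suc K"] this[of "K - 1" "Suc K"] this[of "K - 1" K] Suc.IH
  show ?case
    by (cases "K = 0") (auto simp: marked_count_Suc marked_def zero_in_moser8)
qed

lemma marked_count_between:
  assumes "8 * moser_de_bruijn t + d \<le> 8 * moser_de_bruijn (Suc t)"
  shows "marked_count (8 * moser_de_bruijn t + d) = marked_count (8 * moser_de_bruijn t)
    + of_bool (2 \<le> d) + of_bool (8 * moser_de_bruijn t + d = 8 * moser_de_bruijn (Suc t))"
  using assms
proof (induction d)
  case 0
  then show ?case
    using moser_de_bruijn_less_Suc[of t] by simp
next
  case (Suc d)
  have "marked (Suc (8 * moser_de_bruijn t + d))
      \<longleftrightarrow> d = 1 \<or> Suc (8 * moser_de_bruijn t + d) = 8 * moser_de_bruijn (Suc t)"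
    using marked_between[of t "Suc (8 * moser_de_bruijn t + d)"] Suc.prems by auto
  moreover have "8 * moser_de_bruijn t + 8 \<le> 8 * moser_de_bruijn (Suc t)"
    using moser_de_bruijn_less_Suc[of t] by simp
  ultimately show ?case
    using Suc by (auto simp: marked_count_Suc)
qed

lemma marked_count_moser8: "marked_count (8 * moser_de_bruijn t) = 2 * t"
proof (induction t)
  case 0
  then show ?case by simp
next
  case (Suc t)
  define d where "d = 8 * moser_de_bruijn (Suc t) - 8 * moser_de_bruijn t"
  have "8 * moser_de_bruijn t + 8 \<le> 8 * moser_de_bruijn (Suc t)"
    using moser_de_bruijn_less_Suc[of t] by simp
  then have "8 * moser_de_bruijn (Suc t) = 8 * moser_de_bruijn t + d" "8 \<le> d"
    by (simp_all add: d_def)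
  then show ?case
    using marked_count_between[of t d] Suc.IH by simp
qed

definition w_bit :: "nat \<Rightarrow> bool" where
  "w_bit n \<longleftrightarrow> n \<in> {1, 2, 3} \<or> (4 \<le> n \<and> marked (n div 4))"

lemma w_bit_rec:
  assumes "0 < n"
  shows "w_bit n \<longleftrightarrow> ((4 dvd n \<and> w_bit (n div 4)) \<noteq> (n = 1)) \<noteq> w_bit (n - 1)"
proof (cases "n \<le> 4")
  case True
  then have "n = 1 \<or> n = 2 \<or> n = 3 \<or> n = 4" using assms by auto
  then show ?thesis by (elim disjE) (simp_all add: w_bit_def marked_2 marked_odd)
next
  case n: False
  show ?thesis
  proof (cases "4 dvd n")
    case False
    then have "n div 4 = (n - 1) div 4" "4 \<le> n - 1" using n by presburger+
    then show ?thesis using n False by (simp add: w_bit_def)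
  next
    case True
    then obtain q where q: "n = 4 * q" "2 \<le> q" using n by auto
    then have "(n - 1) div 4 = q - 1" "4 \<le> n - 1" by presburger+
    then have "w_bit (n - 1) \<longleftrightarrow> marked (q - 1)" "w_bit n \<longleftrightarrow> marked q"
      using q by (simp_all add: w_bit_def)
    moreover have "marked q \<longleftrightarrow> w_bit q \<noteq> marked (q - 1)"
    proof (cases "4 \<le> q")
      case True
      then show ?thesis using marked_rec[of q] by (simp add: w_bit_def) blast
    next
      case False
      then have "q = 2 \<or> q = 3" using q by auto
      then show ?thesis by (elim disjE) (simp_all add: w_bit_def marked_2 marked_odd)
    qed
    ultimately show ?thesis using q by simp
  qed
qed

section \<open>The Thue--Morse series and its compositional inverse\<close>

lemma s2_rec: "s2 n = n mod 2 + s2 (n div 2)"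
  by (cases "n = 0") simp_all

declare s2.simps [simp del]

lemma s2_0 [simp]: "s2 0 = 0"
  by (simp add: s2.simps)

lemma tmF_nth: "fps_nth tmF n = of_bool (odd (s2 n))"
  by (cases "n = 0") (simp_all add: tmF_def ptm_def of_nat_bit)

lemma tmF_quadratic_nth: "fps_nth (tmF + (1 + fps_X) * tmF^2) n = of_bool (odd n)"
proof -
  have "fps_nth ((1 + fps_X) * tmF^2) n = fps_nth tmF (n div 2)"
    by (cases "n = 0") (auto simp: fps_mult_fps_X_plus_1_nth fps_square_nth_char2 tmF_nth
        elim!: oddE simp del: add_bit_eq_xor)
  then have "fps_nth (tmF + (1 + fps_X) * tmF^2) n
      = of_bool (odd (s2 n)) + of_bool (odd (s2 (n div 2)))"
    by (simp add: tmF_nth del: add_bit_eq_xor)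
  also have "\<dots> = of_bool (odd n)"
    by (subst s2_rec[of n]) auto
  finally show ?thesis .
qed

lemma tmF_functional_eq: "(1 + fps_X^2) * (tmF + (1 + fps_X) * tmF^2) = fps_X"
proof (rule fps_ext)
  fix n
  let ?E = "tmF + (1 + fps_X) * tmF^2"
  have "fps_nth ((1 + fps_X^2) * ?E) n = fps_nth ?E n + fps_nth (fps_X^2 * ?E) n"
    by (simp only: distrib_right mult_1 fps_add_nth)
  also have "\<dots> = of_bool (odd n) + (if n < 2 then 0 else of_bool (odd (n - 2)))"
    by (simp only: fps_X_power_mult_nth tmF_quadratic_nth)
  also have "\<dots> = fps_nth fps_X n"
    by (cases "n < 2") (auto simp: less_2_cases_iff simp del: add_bit_eq_xor)
  finally show "fps_nth ((1 + fps_X^2) * ?E) n = fps_nth fps_X n" .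
qed

lemma tmG_functional_eq: "(1 + tmG^2) * (fps_X + (1 + tmG) * fps_X^2) = tmG"
proof -
  have G0: "fps_nth tmG 0 = 0"
    by (simp add: tmG_def fps_inv_def)
  have "tmF oo tmG = fps_X"
    unfolding tmG_def by (rule fps_inv_right) (simp_all add: tmF_nth s2_rec[of "Suc 0"])
  then have "((1 + fps_X^2) * (tmF + (1 + fps_X) * tmF^2)) oo tmG
      = (1 + tmG^2) * (fps_X + (1 + tmG) * fps_X^2)"
    by (simp only: fps_compose_mult_distrib[OF G0] fps_compose_add_distrib fps_compose_1
        fps_compose_power[OF G0, symmetric] fps_X_fps_compose_startby0[OF G0])
  then show ?thesis
    by (simp add: tmF_functional_eq G0)
qed

definition tmW :: "bit fps" where
  "tmW = fps_X * (1 + tmG)"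

lemma tmW_nth_rec:
  "fps_nth tmW n
    = (if 4 dvd n then fps_nth tmW (n div 4) else 0) + fps_nth fps_X n + fps_nth (fps_X * tmW) n"
proof -
  have "(2::bit fps) = 0"
    by (simp add: fps_numeral_fps_const)
  then have "tmW^4 + tmW + fps_X + fps_X * tmW = 0"
    unfolding tmW_def by (rule char2_quartic_of_relation[OF _ tmG_functional_eq])
  then have "tmW + (tmW^4 + fps_X + fps_X * tmW) = 0"
    by (simp only: ac_simps)
  then have "tmW = tmW^4 + fps_X + fps_X * tmW"
    by (simp only: add_eq_0_iff uminus_bit_fps)
  then have "fps_nth tmW n = fps_nth (tmW^4) n + fps_nth fps_X n + fps_nth (fps_X * tmW) n"
    by (metis fps_add_nth)
  then show ?thesis
    by (simp add: fps_power4_nth_char2 del: add_bit_eq_xor)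
qed

lemma tmW_nth: "fps_nth tmW n = of_bool (w_bit n)"
proof (induction n rule: less_induct)
  case (less n)
  show ?case
  proof (cases "n = 0")
    case True
    then show ?thesis by (simp add: tmW_def w_bit_def)
  next
    case False
    then have "fps_nth tmW n
        = of_bool (4 dvd n \<and> w_bit (n div 4)) + of_bool (n = 1) + of_bool (w_bit (n - 1))"
      using tmW_nth_rec[of n] less[of "n div 4"] less[of "n - 1"] by (simp del: add_bit_eq_xor)
    also have "\<dots> = of_bool (w_bit n)"
      using w_bit_rec[of n] False by auto
    finally show ?thesis .
  qed
qed

lemma cc_eq_0_iff:
  assumes "0 < m"
  shows "cc m = 0 \<longleftrightarrow> \<not> w_bit (m + 1)"
proof -
  have "fps_nth tmG m = fps_nth tmW (m + 1)"
    using assms by (simp add: tmW_def)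
  then show ?thesis by (simp add: cc_def tmW_nth)
qed

definition D_blocks :: "nat set" where
  "D_blocks = {k. \<not> marked (Suc k)}"

lemma even_in_D_blocks: "even k \<Longrightarrow> k \<in> D_blocks"
  by (simp add: D_blocks_def marked_odd)

lemma infinite_D_blocks: "infinite D_blocks"
  unfolding infinite_nat_iff_unbounded
proof
  fix m
  show "\<exists>k>m. k \<in> D_blocks"
    using even_in_D_blocks[of "2 * m + 2"] by (intro exI[of _ "2 * m + 2"]) simp
qed

lemma DD_eq: "DD = {m. 3 \<le> m \<and> (m - 3) div 4 \<in> D_blocks}"
proof -
  have "m \<in> DD \<longleftrightarrow> 3 \<le> m \<and> (m - 3) div 4 \<in> D_blocks" for m
  proof (cases "3 \<le> m")
    case True
    then have "(m + 1) div 4 = Suc ((m - 3) div 4)" by presburger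
    with True show ?thesis
      by (simp add: DD_def D_blocks_def cc_eq_0_iff w_bit_def)
  next
    case False
    then have "m = 0 \<or> m = 1 \<or> m = 2" by auto
    then show ?thesis
      by (elim disjE) (simp_all add: DD_def cc_eq_0_iff w_bit_def)
  qed
  then show ?thesis by blast
qed

lemma dd_four_mul: "dd (4 * n) = 4 * enumerate D_blocks n + 3"
  unfolding dd_def DD_eq by (rule enumerate_blocks[OF infinite_D_blocks]) simp

lemma card_D_blocks_less: "card {k \<in> D_blocks. k < K} + marked_count K = K"
proof -
  have "{k \<in> D_blocks. k < K} \<union> {k. k < K \<and> marked (Suc k)} = {..<K}"
    "{k \<in> D_blocks. k < K} \<inter> {k. k < K \<and> marked (Suc k)} = {}"
    by (auto simp: D_blocks_def)
  then show ?thesis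
    unfolding marked_count_def by (metis card_Un_disjoint card_lessThan finite_Un finite_lessThan)
qed

lemma zz_eq_1_iff: "zz n = 1 \<longleftrightarrow> enumerate D_blocks n \<in> moser8"
proof -
  define k where "k = enumerate D_blocks n"
  have "k \<in> D_blocks"
    unfolding k_def by (rule enumerate_in_set[OF infinite_D_blocks])
  then have "Suc k \<notin> moser8" "0 < k \<Longrightarrow> k - 1 \<notin> moser8"
    by (auto simp: D_blocks_def marked_def)
  then have odd_count: "odd (marked_count k) \<longleftrightarrow> k \<notin> moser8"
    using odd_marked_count_iff[of k] by auto
  have "n + marked_count k = k"
    using card_D_blocks_less[of k] card_less_enumerate[OF infinite_D_blocks, of n]
    by (simp add: k_def)
  then have "(int (dd (4 * n)) + 1) div 4 - int n = int (marked_count k) + 1"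
    by (simp add: dd_four_mul flip: k_def)
  then have "zz n = (int (marked_count k) + 1) mod 2"
    by (simp add: zz_def)
  then show ?thesis
    using odd_count
    by (simp add: k_def[symmetric] flip: odd_iff_mod_2_eq_one even_iff_mod_2_eq_zero)
qed

lemma enumerate_D_blocks_in_moser8_iff:
  "enumerate D_blocks n \<in> moser8 \<longleftrightarrow> (\<exists>t. n + 2 * t = 8 * moser_de_bruijn t)"
proof
  assume "enumerate D_blocks n \<in> moser8"
  then obtain t where t: "enumerate D_blocks n = 8 * moser_de_bruijn t"
    unfolding in_moser8_iff by blast
  have "n + marked_count (enumerate D_blocks n) = enumerate D_blocks n"
    using card_D_blocks_less card_less_enumerate[OF infinite_D_blocks] by metis
  then show "\<exists>t. n + 2 * t = 8 * moser_de_bruijn t"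
    using t marked_count_moser8[of t] by auto
next
  assume "\<exists>t. n + 2 * t = 8 * moser_de_bruijn t"
  then obtain t where t: "n + 2 * t = 8 * moser_de_bruijn t" ..
  define m where "m = 8 * moser_de_bruijn t"
  have "m \<in> D_blocks"
    by (rule even_in_D_blocks) (simp add: m_def)
  moreover have "card {x \<in> D_blocks. x < m} = n"
    using card_D_blocks_less[of m] marked_count_moser8[of t] t by (simp add: m_def)
  ultimately have "enumerate D_blocks n = m"
    by (simp add: enumerate_eq_iff_card[OF infinite_D_blocks])
  then show "enumerate D_blocks n \<in> moser8"
    unfolding m_def in_moser8_iff by blast
qed

theorem mainTheorem11:
  shows "\<forall>n::nat. (4::int) dvd (int (dd (4*n)) + 1) \<and>
     (zz n = 1 \<longleftrightarrow>
       (\<exists>S::nat set. finite S \<and> (\<forall>i\<in>S. 1 < i) \<and>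
          n = (\<Sum>i\<in>S. 2^(i-1) * (2^i - 1))))"
proof
  fix n :: nat
  have "int (dd (4 * n)) + 1 = 4 * (int (enumerate D_blocks n) + 1)"
    by (simp add: dd_four_mul)
  moreover have "zz n = 1 \<longleftrightarrow>
      (\<exists>S::nat set. finite S \<and> (\<forall>i\<in>S. 1 < i) \<and> n = (\<Sum>i\<in>S. 2^(i-1) * (2^i - 1)))"
    by (simp only: zz_eq_1_iff enumerate_D_blocks_in_moser8_iff ex_sum_iff_moser_de_bruijn)
  ultimately show "(4::int) dvd (int (dd (4*n)) + 1) \<and>
     (zz n = 1 \<longleftrightarrow>
       (\<exists>S::nat set. finite S \<and> (\<forall>i\<in>S. 1 < i) \<and> n = (\<Sum>i\<in>S. 2^(i-1) * (2^i - 1))))"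
    by simp
qed

end
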